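(* Let $0<p<\infty$ and $\alpha>-1$. There is a constant $C=C(p,\alpha)>0$ such that for every $f$, $$\|\mathcal M_\alpha^{exp}f\|_{p,\alpha}\le C^{1/p}\|f\|_{p,\alpha}.$$
   Context: $\mathcal H=\{x+iy:x\in\mathbb R,\ y>0\}$; for $\alpha>-1$, $dV_\alpha(x+iy)=y^\alpha dx\,dy$; $\|g\|_{p,\alpha}=(\int_{\mathcal H}|g|^pdV_\alpha)^{1/p}$. For an interval $I$, $Q_I=\{x+iy:x\in I,0<y<|I|\}$, $|Q_I|_\alpha=\int_{Q_I}dV_\alpha$. The logarithmic maximal function is $\mathcal M_\alpha^{exp}f(z)=\sup\{\exp\big(\frac1{|Q_I|_\alpha}\int_{Q_I}\log|f|\,dV_\alpha\big): I\subset\mathbb R\text{ an interval with }z\in Q_I\}$. *)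

theory Defs
  imports "HOL-Analysis.Analysis"
begin

definition Hplane :: "complex set" where
  "Hplane = {z. 0 < Im z}"

definition wint :: "real \<Rightarrow> complex set \<Rightarrow> (complex \<Rightarrow> ennreal) \<Rightarrow> ennreal" where
  "wint \<alpha> S g = (\<integral>\<^sup>+ z. g z * ennreal (Im z powr \<alpha>) * indicator (S \<inter> Hplane) z \<partial>lborel)"

definition ennpow :: "ennreal \<Rightarrow> real \<Rightarrow> ennreal" where
  "ennpow x q = (if x = \<infinity> then \<infinity> else ennreal (enn2real x powr q))"

definition wnorm :: "real \<Rightarrow> real \<Rightarrow> (complex \<Rightarrow> ennreal) \<Rightarrow> ennreal" where
  "wnorm p \<alpha> G = ennpow (wint \<alpha> UNIV (\<lambda>z. ennpow (G z) p)) (1 / p)"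

definition ilen :: "real set \<Rightarrow> real" where
  "ilen I = Sup I - Inf I"

definition Qbox :: "real set \<Rightarrow> complex set" where
  "Qbox I = {z. Re z \<in> I \<and> 0 < Im z \<and> Im z < ilen I}"

definition Qmeas :: "real \<Rightarrow> real set \<Rightarrow> real" where
  "Qmeas \<alpha> I = enn2real (wint \<alpha> (Qbox I) (\<lambda>_. 1))"

text \<open>The integral of log|f| is split into its
  positive part A and negative part B (log 0 = -\<infinity>); the average is (A - B)/|Q_I|_alpha, and
  exp(-\<infinity>) = 0, exp(+\<infinity>) = \<infinity>.  (If A = B = \<infinity>, the integral is undefined; we use 0.)\<close>

definition logpos :: "('b::real_normed_vector) \<Rightarrow> ennreal" where
  "logpos w = (if w = 0 then 0 else ennreal (max 0 (ln (norm w))))"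

definition logneg :: "('b::real_normed_vector) \<Rightarrow> ennreal" where
  "logneg w = (if w = 0 then \<infinity> else ennreal (max 0 (- ln (norm w))))"

definition expavg :: "real \<Rightarrow> (complex \<Rightarrow> 'b::real_normed_vector) \<Rightarrow> real set \<Rightarrow> ennreal" where
  "expavg \<alpha> f I =
     (let A = wint \<alpha> (Qbox I) (\<lambda>z. logpos (f z));
          B = wint \<alpha> (Qbox I) (\<lambda>z. logneg (f z))
      in if B = \<infinity> then 0 else if A = \<infinity> then \<infinity>
         else ennreal (exp ((enn2real A - enn2real B) / Qmeas \<alpha> I)))"

definition Mexp :: "real \<Rightarrow> (complex \<Rightarrow> 'b::real_normed_vector) \<Rightarrow> complex \<Rightarrow> ennreal" where
  "Mexp \<alpha> f z = (SUP I \<in> {I. is_interval I \<and> bounded I \<and> z \<in> Qbox I}. expavg \<alpha> f I)"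

end

theory Submission
  imports Defs
begin

text \<open>
  For \<open>s > 0\<close>, Jensen's inequality bounds the exponential of the \<open>dV_\<alpha>\<close>-average of \<open>log |f|\<close>
  over a box \<open>Q_I\<close> by the \<open>s\<close>-th root of the average of \<open>|f| ^ s\<close>. As \<open>|Q_I|_\<alpha> = |I| ^ (\<alpha> + 2) / (\<alpha> + 1)\<close>
  and the kernel \<open>K(z, w) = max (|Re z - Re w|, Im z, Im w) ^ -(\<alpha> + 2)\<close> is at least \<open>|I| ^ -(\<alpha> + 2)\<close>
  on \<open>Q_I \<times> Q_I\<close>, this gives \<open>(M_exp f z) ^ s \<le> (\<alpha> + 1) T(|f| ^ s)(z)\<close> for the positive integral
  operator \<open>T\<close> with kernel \<open>K\<close>. Taking \<open>s = p / 2\<close>, it remains to bound \<open>T\<close> on \<open>L\<^sup>2(dV_\<alpha>)\<close>,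
  which is Schur's test with the test function \<open>(Im w) ^ -((\<alpha> + 1) / 2)\<close>.
\<close>

section \<open>The weighted measure on the half plane\<close>

lemma Hplane_sets [measurable]: "Hplane \<in> sets borel"
  unfolding Hplane_def by measurable

definition dV :: "real \<Rightarrow> complex measure" where
  "dV \<alpha> = density lborel (\<lambda>z. ennreal (Im z powr \<alpha>) * indicator Hplane z)"

lemma sets_dV [measurable_cong]: "sets (dV \<alpha>) = sets borel"
  by (simp add: dV_def)

lemma sigma_finite_dV: "sigma_finite_measure (dV \<alpha>)"
  unfolding dV_def
  by (subst sigma_finite_measure.sigma_finite_iff_density_finite[OF sigma_finite_lborel])
    (auto simp: ennreal_mult_eq_top_iff split: split_indicator)

lemma AE_dV_Im_pos: "AE z in dV \<alpha>. 0 < Im z"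
  unfolding dV_def by (subst AE_density) (auto simp: Hplane_def split: split_indicator)

lemma nn_integral_dV:
  assumes [measurable]: "g \<in> borel_measurable borel"
  shows "(\<integral>\<^sup>+z. g z \<partial>dV \<alpha>) = (\<integral>\<^sup>+z. g z * ennreal (Im z powr \<alpha>) * indicator Hplane z \<partial>lborel)"
  unfolding dV_def by (subst nn_integral_density) (auto simp: mult_ac)

lemma wint_UNIV_eq_nn_integral_dV:
  "g \<in> borel_measurable borel \<Longrightarrow> wint \<alpha> UNIV g = (\<integral>\<^sup>+z. g z \<partial>dV \<alpha>)"
  by (simp add: wint_def nn_integral_dV)

lemma measurable_Complex_pair [measurable]:
  "(\<lambda>(u, v). Complex u v) \<in> borel_measurable (lborel \<Otimes>\<^sub>M (lborel :: real measure))"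
  unfolding Complex_eq split_beta' by measurable

lemma lborel_complex_eq_distr:
  "(lborel :: complex measure) = distr (lborel \<Otimes>\<^sub>M lborel) borel (\<lambda>(u, v). Complex u v)"
proof (rule lborel_eqI)
  fix l u :: complex
  assume le: "\<And>b. b \<in> Basis \<Longrightarrow> l \<bullet> b \<le> u \<bullet> b"
  then have "Re l \<le> Re u" "Im l \<le> Im u"
    using le[of 1] le[of \<i>] by (auto simp: Basis_complex_def)
  moreover have "(\<lambda>(u, v). Complex u v) -` box l u \<inter> space (lborel \<Otimes>\<^sub>M lborel)
      = {Re l<..<Re u} \<times> {Im l<..<Im u}"
    by (auto simp: mem_box Basis_complex_def space_pair_measure)
  ultimately show "emeasure (distr (lborel \<Otimes>\<^sub>M lborel) borel (\<lambda>(u, v). Complex u v)) (box l u)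
      = (\<Prod>b\<in>Basis. (u - l) \<bullet> b)"
    by (simp add: emeasure_distr lborel.emeasure_pair_measure_Times Basis_complex_def ennreal_mult)
qed simp

lemma nn_integral_lborel_complex:
  fixes g :: "complex \<Rightarrow> ennreal"
  assumes [measurable]: "g \<in> borel_measurable borel"
  shows "(\<integral>\<^sup>+z. g z \<partial>lborel) = (\<integral>\<^sup>+v. \<integral>\<^sup>+u. g (Complex u v) \<partial>lborel \<partial>lborel)"
proof -
  have "(\<integral>\<^sup>+z. g z \<partial>lborel) = (\<integral>\<^sup>+x. g (case x of (u, v) \<Rightarrow> Complex u v) \<partial>(lborel \<Otimes>\<^sub>M lborel))"
    by (subst lborel_complex_eq_distr) (simp add: nn_integral_distr)
  also have "\<dots> = (\<integral>\<^sup>+v. \<integral>\<^sup>+u. g (Complex u v) \<partial>lborel \<partial>lborel)"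
    by (subst lborel_pair.nn_integral_snd[symmetric]) (simp_all add: split_beta')
  finally show ?thesis .
qed

section \<open>The box kernel and Schur's test\<close>

lemma nn_integral_powr_atLeast:
  fixes m e :: real
  assumes "0 < m" "e < -1"
  shows "(\<integral>\<^sup>+t. ennreal (if m \<le> t then t powr e else 0) \<partial>lborel) = ennreal (- (m powr (e + 1)) / (e + 1))"
proof -
  have "((\<lambda>t. if t \<in> {m..} then t powr e else 0) has_integral - (m powr (e + 1)) / (e + 1)) UNIV"
    using has_integral_powr_to_inf[OF assms(2,1)] by (subst has_integral_restrict_UNIV)
  then show ?thesis
    using assms by (subst nn_integral_has_integral_lborel) auto
qed

lemma nn_integral_powr_atLeastAtMost_0:
  fixes y b :: real
  assumes "0 \<le> y" "-1 < b"
  shows "(\<integral>\<^sup>+t. ennreal (if 0 \<le> t \<and> t \<le> y then t powr b else 0) \<partial>lborel) = ennreal (y powr (b + 1) / (b + 1))"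
proof -
  have "((\<lambda>t. if t \<in> {0..y} then t powr b else 0) has_integral y powr (b + 1) / (b + 1)) UNIV"
    using has_integral_powr_from_0[OF assms(2,1)] by (subst has_integral_restrict_UNIV)
  then show ?thesis
    using assms by (subst nn_integral_has_integral_lborel) auto
qed

lemma nn_integral_powr_max_powr_le:
  fixes y b c :: real
  assumes y: "0 < y" and b: "-1 < b" and bc: "b + c < -1"
  shows "(\<integral>\<^sup>+v. ennreal (if 0 < v then v powr b * max y v powr c else 0) \<partial>lborel)
    \<le> ennreal (y powr (b + c + 1) * (1 / (b + 1) - 1 / (b + c + 1)))"
proof -
  have "(\<integral>\<^sup>+v. ennreal (if 0 < v then v powr b * max y v powr c else 0) \<partial>lborel)
      \<le> (\<integral>\<^sup>+v. ennreal (y powr c) * ennreal (if 0 \<le> v \<and> v \<le> y then v powr b else 0)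
              + ennreal (if y \<le> v then v powr (b + c) else 0) \<partial>lborel)"
  proof (intro nn_integral_mono)
    fix v :: real
    have "(if 0 < v then v powr b * max y v powr c else 0)
        \<le> y powr c * (if 0 \<le> v \<and> v \<le> y then v powr b else 0) + (if y \<le> v then v powr (b + c) else 0)"
      using y by (cases "v \<le> y") (auto simp: max_def powr_add)
    then show "ennreal (if 0 < v then v powr b * max y v powr c else 0)
        \<le> ennreal (y powr c) * ennreal (if 0 \<le> v \<and> v \<le> y then v powr b else 0)
          + ennreal (if y \<le> v then v powr (b + c) else 0)"
      by (simp add: ennreal_plus[symmetric] ennreal_mult[symmetric] ennreal_leI del: ennreal_plus)
  qed
  also have "\<dots> = ennreal (y powr c) * ennreal (y powr (b + 1) / (b + 1))
      + ennreal (- (y powr (b + c + 1)) / (b + c + 1))"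
    using y b bc
    by (subst nn_integral_add)
       (auto simp: nn_integral_cmult nn_integral_powr_atLeastAtMost_0 nn_integral_powr_atLeast)
  also have "\<dots> = ennreal (y powr (b + c + 1) * (1 / (b + 1) - 1 / (b + c + 1)))"
  proof -
    have "y powr c * (y powr (b + 1) / (b + 1)) = y powr (b + c + 1) / (b + 1)"
      by (simp add: powr_add[symmetric] add_ac)
    moreover have "0 \<le> - (y powr (b + c + 1)) / (b + c + 1)"
      using bc by (intro divide_nonpos_neg) auto
    ultimately show ?thesis
      using b by (simp add: ennreal_mult[symmetric] ennreal_plus[symmetric] right_diff_distrib del: ennreal_plus)
  qed
  finally show ?thesis .
qed

lemma nn_integral_max_abs_powr_le:
  fixes x m a :: real
  assumes m: "0 < m" and a: "1 < a"
  shows "(\<integral>\<^sup>+u. ennreal (max \<bar>x - u\<bar> m powr -a) \<partial>lborel) \<le> ennreal (2 * a / (a - 1) * m powr (1 - a))"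
proof -
  \<comment> \<open>The factor \<open>t powr 0 = 1\<close> makes \<open>g\<close> the case \<open>b = 0\<close> of the previous lemma.\<close>
  define g where "g t = ennreal (if 0 < t then t powr 0 * max m t powr -a else 0)" for t :: real
  have [measurable]: "g \<in> borel_measurable borel"
    unfolding g_def by measurable
  have "m powr (0 + - a + 1) * (1 / (0 + 1) - 1 / (0 + - a + 1)) = a / (a - 1) * m powr (1 - a)"
    using a by (simp add: field_simps)
  then have g_int: "(\<integral>\<^sup>+t. g t \<partial>lborel) \<le> ennreal (a / (a - 1) * m powr (1 - a))"
    using nn_integral_powr_max_powr_le[of m 0 "-a"] m a unfolding g_def by simp
  have "AE u in lborel. ennreal (max \<bar>x - u\<bar> m powr -a) \<le> g (-x + 1 * u) + g (x + (-1) * u)"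
    using AE_lborel_singleton[of x]
    by eventually_elim (auto simp: g_def abs_if max.commute ennreal_plus[symmetric] simp del: ennreal_plus)
  then have "(\<integral>\<^sup>+u. ennreal (max \<bar>x - u\<bar> m powr -a) \<partial>lborel)
      \<le> (\<integral>\<^sup>+u. g (-x + 1 * u) \<partial>lborel) + (\<integral>\<^sup>+u. g (x + (-1) * u) \<partial>lborel)"
    by (subst nn_integral_add[symmetric]) (auto intro: nn_integral_mono_AE)
  also have "\<dots> = 2 * (\<integral>\<^sup>+t. g t \<partial>lborel)"
    using nn_integral_real_affine[of g 1 "-x"] nn_integral_real_affine[of g "-1" x] by (simp add: mult_2)
  also have "\<dots> \<le> 2 * ennreal (a / (a - 1) * m powr (1 - a))"
    using g_int by (intro mult_left_mono) auto
  also have "\<dots> = ennreal (2 * (a / (a - 1) * m powr (1 - a)))"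
    using ennreal_mult'[of 2 "a / (a - 1) * m powr (1 - a)"] a by simp
  finally show ?thesis
    by (simp add: mult.assoc)
qed

definition box_kernel :: "real \<Rightarrow> complex \<Rightarrow> complex \<Rightarrow> real" where
  "box_kernel \<alpha> z w = max (max \<bar>Re z - Re w\<bar> (Im z)) (Im w) powr -(\<alpha> + 2)"

lemma box_kernel_nonneg: "0 \<le> box_kernel \<alpha> z w"
  by (simp add: box_kernel_def)

lemma box_kernel_commute: "box_kernel \<alpha> z w = box_kernel \<alpha> w z"
  unfolding box_kernel_def by (simp add: abs_minus_commute max.commute max.left_commute)

lemma measurable_box_kernel [measurable (raw)]:
  assumes [measurable]: "f \<in> borel_measurable M" "g \<in> borel_measurable M"
  shows "(\<lambda>x. box_kernel \<alpha> (f x) (g x)) \<in> borel_measurable M"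
  unfolding box_kernel_def by measurable

lemma box_kernel_test_function:
  fixes \<alpha> :: real and z :: complex
  assumes \<alpha>: "-1 < \<alpha>" and z: "0 < Im z"
  shows "(\<integral>\<^sup>+w. ennreal (box_kernel \<alpha> z w * Im w powr -((\<alpha> + 1) / 2)) \<partial>dV \<alpha>)
    \<le> ennreal (8 * (\<alpha> + 2) / (\<alpha> + 1)\<^sup>2 * Im z powr -((\<alpha> + 1) / 2))"
proof -
  define a where "a = \<alpha> + 2"
  define b where "b = (\<alpha> - 1) / 2"
  define c where "c = 2 * a / (a - 1)"
  have a: "1 < a" and b: "-1 < b" and c: "0 < c"
    using \<alpha> by (auto simp: a_def b_def c_def)
  let ?F = "\<lambda>w. ennreal (box_kernel \<alpha> z w * Im w powr -((\<alpha> + 1) / 2)) * ennreal (Im w powr \<alpha>) * indicator Hplane w"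
  have inner: "(\<integral>\<^sup>+u. ?F (Complex u v) \<partial>lborel)
      \<le> ennreal c * ennreal (if 0 < v then v powr b * max (Im z) v powr (1 - a) else 0)" for v
  proof (cases "0 < v")
    case False
    then show ?thesis by (simp add: Hplane_def)
  next
    case v: True
    have "v powr -((\<alpha> + 1) / 2) * v powr \<alpha> = v powr b"
      by (simp add: b_def powr_add[symmetric] field_simps)
    then have "(\<integral>\<^sup>+u. ?F (Complex u v) \<partial>lborel)
        = (\<integral>\<^sup>+u. ennreal (v powr b) * ennreal (max \<bar>Re z - u\<bar> (max (Im z) v) powr -a) \<partial>lborel)"
      using v by (intro nn_integral_cong)
        (simp add: Hplane_def box_kernel_def a_def max.assoc ennreal_mult[symmetric] mult_ac del: ennreal_mult')
    also have "\<dots> = ennreal (v powr b) * (\<integral>\<^sup>+u. ennreal (max \<bar>Re z - u\<bar> (max (Im z) v) powr -a) \<partial>lborel)"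
      by (rule nn_integral_cmult) measurable
    also have "\<dots> \<le> ennreal (v powr b) * ennreal (c * max (Im z) v powr (1 - a))"
      unfolding c_def using z a by (intro mult_left_mono nn_integral_max_abs_powr_le) auto
    finally show ?thesis
      using v c by (simp add: ennreal_mult[symmetric] mult_ac del: ennreal_mult')
  qed
  have "(\<integral>\<^sup>+w. ennreal (box_kernel \<alpha> z w * Im w powr -((\<alpha> + 1) / 2)) \<partial>dV \<alpha>)
      = (\<integral>\<^sup>+v. \<integral>\<^sup>+u. ?F (Complex u v) \<partial>lborel \<partial>lborel)"
    by (simp add: nn_integral_dV nn_integral_lborel_complex)
  also have "\<dots> \<le> ennreal c * (\<integral>\<^sup>+v. ennreal (if 0 < v then v powr b * max (Im z) v powr (1 - a) else 0) \<partial>lborel)"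
    by (subst nn_integral_cmult[symmetric]) (measurable, intro nn_integral_mono inner)
  also have "\<dots> \<le> ennreal c * ennreal (Im z powr (b + (1 - a) + 1) * (1 / (b + 1) - 1 / (b + (1 - a) + 1)))"
    using z b \<alpha> by (intro mult_left_mono nn_integral_powr_max_powr_le) (auto simp: a_def b_def)
  also have "\<dots> = ennreal (8 * (\<alpha> + 2) / (\<alpha> + 1)\<^sup>2 * Im z powr -((\<alpha> + 1) / 2))"
  proof -
    have e: "b + 1 = (\<alpha> + 1) / 2" "b + (1 - a) + 1 = -((\<alpha> + 1) / 2)"
      by (simp_all add: a_def b_def field_simps)
    have "c * (Im z powr (b + (1 - a) + 1) * (1 / (b + 1) - 1 / (b + (1 - a) + 1)))
        = 8 * (\<alpha> + 2) / (\<alpha> + 1)\<^sup>2 * Im z powr -((\<alpha> + 1) / 2)"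
      unfolding e by (simp add: a_def c_def power2_eq_square add.commute algebra_simps)
    then show ?thesis
      using c by (metis ennreal_mult' less_imp_le)
  qed
  finally show ?thesis .
qed

lemma Cauchy_Schwarz_nn_integral_weight:
  fixes k \<phi> :: "'a \<Rightarrow> real" and h :: "'a \<Rightarrow> ennreal"
  assumes [measurable]: "k \<in> borel_measurable M" "\<phi> \<in> borel_measurable M" "h \<in> borel_measurable M"
    and k: "\<And>w. 0 \<le> k w" and \<phi>: "AE w in M. 0 < \<phi> w"
  shows "(\<integral>\<^sup>+w. ennreal (k w) * h w \<partial>M)\<^sup>2
    \<le> (\<integral>\<^sup>+w. ennreal (k w * \<phi> w) \<partial>M) * (\<integral>\<^sup>+w. ennreal (k w / \<phi> w) * (h w)\<^sup>2 \<partial>M)"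
proof -
  define F where "F w = ennreal (sqrt (k w * \<phi> w))" for w
  define G where "G w = ennreal (sqrt (k w / \<phi> w)) * h w" for w
  have [measurable]: "F \<in> borel_measurable M" "G \<in> borel_measurable M"
    unfolding F_def G_def by measurable
  have "(\<integral>\<^sup>+w. ennreal (k w) * h w \<partial>M) = (\<integral>\<^sup>+w. F w * G w \<partial>M)"
    using \<phi>
  proof (intro nn_integral_cong_AE, eventually_elim)
    case (elim w)
    then have "sqrt (k w * \<phi> w) * sqrt (k w / \<phi> w) = k w"
      using k[of w] by (simp add: real_sqrt_mult[symmetric])
    then have "ennreal (sqrt (k w * \<phi> w)) * ennreal (sqrt (k w / \<phi> w)) = ennreal (k w)"
      using k[of w] elim by (subst ennreal_mult'[symmetric]) auto
    then show ?case
      by (simp add: F_def G_def mult.assoc[symmetric])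
  qed
  also have "(\<dots>)\<^sup>2 \<le> (\<integral>\<^sup>+w. F w ^ 2 \<partial>M) * (\<integral>\<^sup>+w. G w ^ 2 \<partial>M)"
    by (rule Cauchy_Schwarz_nn_integral) measurable
  also have "(\<integral>\<^sup>+w. F w ^ 2 \<partial>M) = (\<integral>\<^sup>+w. ennreal (k w * \<phi> w) \<partial>M)"
    using \<phi> by (intro nn_integral_cong_AE, eventually_elim) (use k in \<open>simp add: F_def ennreal_power\<close>)
  also have "(\<integral>\<^sup>+w. G w ^ 2 \<partial>M) = (\<integral>\<^sup>+w. ennreal (k w / \<phi> w) * (h w)\<^sup>2 \<partial>M)"
    using \<phi> by (intro nn_integral_cong_AE, eventually_elim) (use k in \<open>simp add: G_def power_mult_distrib ennreal_power\<close>)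
  finally show ?thesis .
qed

lemma Schur_test_nn_integral:
  fixes M :: "'a measure" and K :: "'a \<Rightarrow> 'a \<Rightarrow> real" and \<phi> :: "'a \<Rightarrow> real" and h :: "'a \<Rightarrow> ennreal"
  assumes M: "sigma_finite_measure M"
    and K [measurable]: "case_prod K \<in> borel_measurable (M \<Otimes>\<^sub>M M)"
    and K_nonneg: "\<And>z w. 0 \<le> K z w" and K_commute: "\<And>z w. K z w = K w z"
    and \<phi> [measurable]: "\<phi> \<in> borel_measurable M" and \<phi>_pos: "AE w in M. 0 < \<phi> w"
    and test: "AE z in M. (\<integral>\<^sup>+w. ennreal (K z w * \<phi> w) \<partial>M) \<le> ennreal (C * \<phi> z)"
    and C: "0 \<le> C" and h [measurable]: "h \<in> borel_measurable M"
  shows "(\<integral>\<^sup>+z. (\<integral>\<^sup>+w. ennreal (K z w) * h w \<partial>M)\<^sup>2 \<partial>M) \<le> ennreal (C\<^sup>2) * (\<integral>\<^sup>+w. (h w)\<^sup>2 \<partial>M)"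
proof -
  interpret pair_sigma_finite M M
    using M by (simp add: pair_sigma_finite_def)
  define g where "g w = ennreal (1 / \<phi> w) * (h w)\<^sup>2" for w
  have [measurable]: "g \<in> borel_measurable M"
    unfolding g_def by measurable
  have "(\<integral>\<^sup>+z. (\<integral>\<^sup>+w. ennreal (K z w) * h w \<partial>M)\<^sup>2 \<partial>M)
      \<le> (\<integral>\<^sup>+z. ennreal C * (\<integral>\<^sup>+w. ennreal (\<phi> z) * (ennreal (K z w) * g w) \<partial>M) \<partial>M)"
    using test AE_space[where M=M]
  proof (intro nn_integral_mono_AE, eventually_elim)
    case (elim z)
    have [measurable]: "(\<lambda>w. K z w) \<in> borel_measurable M"
      using measurable_Pair2[OF K] elim by simp
    have "(\<integral>\<^sup>+w. ennreal (K z w) * h w \<partial>M)\<^sup>2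
        \<le> (\<integral>\<^sup>+w. ennreal (K z w * \<phi> w) \<partial>M) * (\<integral>\<^sup>+w. ennreal (K z w / \<phi> w) * (h w)\<^sup>2 \<partial>M)"
      using K_nonneg \<phi>_pos by (intro Cauchy_Schwarz_nn_integral_weight) auto
    also have "\<dots> \<le> ennreal (C * \<phi> z) * (\<integral>\<^sup>+w. ennreal (K z w) * g w \<partial>M)"
      using elim K_nonneg
      by (intro mult_mono) (auto simp: g_def divide_inverse ennreal_mult' mult.assoc)
    also have "\<dots> = ennreal C * (\<integral>\<^sup>+w. ennreal (\<phi> z) * (ennreal (K z w) * g w) \<partial>M)"
      using elim C by (simp add: nn_integral_cmult ennreal_mult' mult.assoc)
    finally show ?case .
  qed
  also have "\<dots> = ennreal C * (\<integral>\<^sup>+w. g w * (\<integral>\<^sup>+z. ennreal (K w z * \<phi> z) \<partial>M) \<partial>M)"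
    by (subst nn_integral_cmult, measurable, subst Fubini', measurable)
      (auto intro!: nn_integral_cong simp: nn_integral_cmult[symmetric] K_commute K_nonneg ennreal_mult'' mult_ac)
  also have "\<dots> \<le> ennreal C * (\<integral>\<^sup>+w. ennreal C * (h w)\<^sup>2 \<partial>M)"
    using test \<phi>_pos
  proof (intro mult_left_mono nn_integral_mono_AE, eventually_elim)
    case (elim w)
    then have "g w * (\<integral>\<^sup>+z. ennreal (K w z * \<phi> z) \<partial>M) \<le> g w * ennreal (C * \<phi> w)"
      by (intro mult_left_mono) auto
    also have "\<dots> = (ennreal (1 / \<phi> w) * ennreal (C * \<phi> w)) * (h w)\<^sup>2"
      by (simp add: g_def mult_ac)
    also have "ennreal (1 / \<phi> w) * ennreal (C * \<phi> w) = ennreal C"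
      using elim C by (simp add: ennreal_mult[symmetric] del: ennreal_mult')
    finally show ?case .
  qed simp
  also have "\<dots> = ennreal (C\<^sup>2) * (\<integral>\<^sup>+w. (h w)\<^sup>2 \<partial>M)"
    using C by (simp add: nn_integral_cmult power2_eq_square ennreal_mult mult.assoc)
  finally show ?thesis .
qed

definition box_operator :: "real \<Rightarrow> (complex \<Rightarrow> ennreal) \<Rightarrow> complex \<Rightarrow> ennreal" where
  "box_operator \<alpha> h z = (\<integral>\<^sup>+w. ennreal (box_kernel \<alpha> z w) * h w \<partial>dV \<alpha>)"

lemma measurable_box_operator [measurable]:
  assumes [measurable]: "h \<in> borel_measurable borel"
  shows "box_operator \<alpha> h \<in> borel_measurable borel"
  unfolding box_operator_def
  by (rule sigma_finite_measure.borel_measurable_nn_integral[OF sigma_finite_dV]) (simp add: split_beta')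

lemma box_operator_L2_le:
  assumes \<alpha>: "-1 < \<alpha>" and [measurable]: "h \<in> borel_measurable borel"
  shows "(\<integral>\<^sup>+z. (box_operator \<alpha> h z)\<^sup>2 \<partial>dV \<alpha>)
    \<le> ennreal ((8 * (\<alpha> + 2) / (\<alpha> + 1)\<^sup>2)\<^sup>2) * (\<integral>\<^sup>+w. (h w)\<^sup>2 \<partial>dV \<alpha>)"
  unfolding box_operator_def
proof (rule Schur_test_nn_integral[OF sigma_finite_dV])
  show "case_prod (box_kernel \<alpha>) \<in> borel_measurable (dV \<alpha> \<Otimes>\<^sub>M dV \<alpha>)"
    by (simp add: split_beta')
  show "AE z in dV \<alpha>. (\<integral>\<^sup>+w. ennreal (box_kernel \<alpha> z w * Im w powr -((\<alpha> + 1) / 2)) \<partial>dV \<alpha>)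
      \<le> ennreal (8 * (\<alpha> + 2) / (\<alpha> + 1)\<^sup>2 * Im z powr -((\<alpha> + 1) / 2))"
    using AE_dV_Im_pos by eventually_elim (rule box_kernel_test_function[OF \<alpha>])
qed (use \<alpha> in \<open>auto simp: box_kernel_nonneg box_kernel_commute intro: eventually_mono[OF AE_dV_Im_pos]\<close>)

section \<open>Carleson boxes\<close>

lemma bounded_subset_Inf_Sup:
  fixes I :: "real set"
  assumes "bounded I"
  shows "I \<subseteq> {Inf I..Sup I}"
  using bounded_imp_bdd_below[OF assms] bounded_imp_bdd_above[OF assms] by (auto intro: cInf_lower cSup_upper)

lemma is_interval_Ioo_Inf_Sup_subset:
  fixes I :: "real set"
  assumes "is_interval I" "bounded I" "I \<noteq> {}"
  shows "{Inf I<..<Sup I} \<subseteq> I"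
proof
  fix t assume "t \<in> {Inf I<..<Sup I}"
  then obtain a b where "a \<in> I" "a < t" "b \<in> I" "t < b"
    using assms by (auto simp: cInf_less_iff less_cSup_iff bounded_imp_bdd_below bounded_imp_bdd_above)
  then show "t \<in> I"
    using assms(1) unfolding is_interval_1 by (meson less_imp_le)
qed

lemma bounded_interval_sets:
  fixes I :: "real set"
  assumes "is_interval I" "bounded I" "I \<noteq> {}"
  shows "I \<in> sets borel"
proof -
  have "I = {Inf I<..<Sup I} \<union> (I \<inter> {Inf I, Sup I})"
    using bounded_subset_Inf_Sup[OF assms(2)] is_interval_Ioo_Inf_Sup_subset[OF assms] by fastforce
  also have "\<dots> \<in> sets borel"
    by (intro sets.Un borel_open borel_closed finite_imp_closed) auto
  finally show ?thesis .
qed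

lemma emeasure_bounded_interval:
  fixes I :: "real set"
  assumes "is_interval I" "bounded I" "I \<noteq> {}"
  shows "emeasure lborel I = ennreal (ilen I)"
proof -
  have I: "I \<in> sets borel" "{Inf I<..<Sup I} \<subseteq> I" "I \<subseteq> {Inf I..Sup I}"
    using assms bounded_interval_sets is_interval_Ioo_Inf_Sup_subset bounded_subset_Inf_Sup by auto
  then have "Inf I \<le> Sup I"
    using assms(3) by fastforce
  moreover have "emeasure lborel {Inf I<..<Sup I} \<le> emeasure lborel I" "emeasure lborel I \<le> emeasure lborel {Inf I..Sup I}"
    using I by (auto intro: emeasure_mono)
  ultimately show ?thesis
    by (simp add: ilen_def)
qed

lemma Qbox_sets [measurable]:
  assumes [measurable]: "I \<in> sets borel"
  shows "Qbox I \<in> sets borel"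
  unfolding Qbox_def by measurable

lemma Qbox_subset_Hplane: "Qbox I \<subseteq> Hplane"
  by (auto simp: Qbox_def Hplane_def)

lemma Qbox_nonemptyD:
  assumes "Qbox I \<noteq> {}"
  shows "I \<noteq> {}" and "0 < ilen I"
  using assms by (auto simp: Qbox_def)

lemma wint_Qbox_one:
  assumes I: "is_interval I" "bounded I" "Qbox I \<noteq> {}" and \<alpha>: "-1 < \<alpha>"
  shows "wint \<alpha> (Qbox I) (\<lambda>_. 1) = ennreal (ilen I powr (\<alpha> + 2) / (\<alpha> + 1))"
proof -
  define L where "L = ilen I"
  have L: "0 < L" and [measurable]: "I \<in> sets borel"
    using I Qbox_nonemptyD bounded_interval_sets by (auto simp: L_def)
  have "wint \<alpha> (Qbox I) (\<lambda>_. 1) = (\<integral>\<^sup>+z. ennreal (Im z powr \<alpha>) * indicator (Qbox I) z \<partial>lborel)"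
    unfolding wint_def using Qbox_subset_Hplane by (intro nn_integral_cong) (auto simp: Int_absorb2)
  also have "\<dots> = (\<integral>\<^sup>+v. (ennreal (v powr \<alpha>) * indicator {0<..<L} v) * (\<integral>\<^sup>+u. indicator I u \<partial>lborel) \<partial>lborel)"
    by (subst nn_integral_lborel_complex, measurable, intro nn_integral_cong, subst nn_integral_cmult[symmetric])
      (auto intro!: nn_integral_cong simp: Qbox_def L_def indicator_def)
  also have "\<dots> = (\<integral>\<^sup>+v. ennreal L * ennreal (if 0 \<le> v \<and> v \<le> L then v powr \<alpha> else 0) \<partial>lborel)"
    using emeasure_bounded_interval[of I] I Qbox_nonemptyD[OF I(3)]
    by (intro nn_integral_cong_AE eventually_mono[OF AE_lborel_singleton[of L]])
      (auto simp: L_def mult_ac split: split_indicator)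
  also have "\<dots> = ennreal L * ennreal (L powr (\<alpha> + 1) / (\<alpha> + 1))"
    using L \<alpha> by (simp add: nn_integral_cmult nn_integral_powr_atLeastAtMost_0)
  also have "\<dots> = ennreal (L powr (\<alpha> + 2) / (\<alpha> + 1))"
  proof -
    have "L powr (\<alpha> + 2) = L * L powr (\<alpha> + 1)"
      using L powr_add[of L 1 "\<alpha> + 1"] by (simp add: add_ac)
    then show ?thesis
      using L \<alpha> by (simp add: ennreal_mult[symmetric] del: ennreal_mult')
  qed
  finally show ?thesis
    by (simp add: L_def)
qed

lemma Qmeas_eq:
  assumes "is_interval I" "bounded I" "Qbox I \<noteq> {}" "-1 < \<alpha>"
  shows "Qmeas \<alpha> I = ilen I powr (\<alpha> + 2) / (\<alpha> + 1)"
  using wint_Qbox_one[OF assms] assms(4) by (simp add: Qmeas_def)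

lemma box_kernel_Qbox_ge:
  assumes I: "bounded I" and z: "z \<in> Qbox I" and w: "w \<in> Qbox I" and \<alpha>: "-1 < \<alpha>"
  shows "1 \<le> ilen I powr (\<alpha> + 2) * box_kernel \<alpha> z w"
proof -
  define M where "M = max (max \<bar>Re z - Re w\<bar> (Im z)) (Im w)"
  have "Re z \<in> {Inf I..Sup I}" "Re w \<in> {Inf I..Sup I}"
    using bounded_subset_Inf_Sup[OF I] z w by (auto simp: Qbox_def)
  then have "\<bar>Re z - Re w\<bar> \<le> ilen I"
    by (auto simp: ilen_def abs_le_iff)
  then have "0 < M" "M \<le> ilen I"
    using z w by (auto simp: M_def Qbox_def)
  then have "ilen I powr (\<alpha> + 2) * ilen I powr -(\<alpha> + 2) \<le> ilen I powr (\<alpha> + 2) * M powr -(\<alpha> + 2)"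
    using \<alpha> by (intro mult_left_mono powr_mono2') auto
  then show ?thesis
    using \<open>0 < M\<close> \<open>M \<le> ilen I\<close> by (simp add: box_kernel_def M_def[symmetric] powr_add[symmetric])
qed

lemma wint_mono: "(\<And>w. g w \<le> g' w) \<Longrightarrow> wint \<alpha> S g \<le> wint \<alpha> S g'"
  unfolding wint_def by (intro nn_integral_mono mult_right_mono) auto

lemma wint_cong_Hplane: "(\<And>w. w \<in> Hplane \<Longrightarrow> g w = g' w) \<Longrightarrow> wint \<alpha> S g = wint \<alpha> S g'"
  unfolding wint_def by (intro nn_integral_cong) (auto split: split_indicator)

lemma wint_add:
  assumes [measurable]: "S \<in> sets borel" "g \<in> borel_measurable borel" "g' \<in> borel_measurable borel"
  shows "wint \<alpha> S (\<lambda>w. g w + g' w) = wint \<alpha> S g + wint \<alpha> S g'"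
  unfolding wint_def by (subst nn_integral_add[symmetric]) (auto intro!: nn_integral_cong simp: distrib_right)

lemma wint_cmult:
  assumes [measurable]: "S \<in> sets borel" "g \<in> borel_measurable borel"
  shows "wint \<alpha> S (\<lambda>w. c * g w) = c * wint \<alpha> S g"
  unfolding wint_def by (subst nn_integral_cmult[symmetric]) (auto intro!: nn_integral_cong simp: mult_ac)

lemma wint_Qbox_le_box_operator:
  assumes I: "bounded I" "z \<in> Qbox I" and \<alpha>: "-1 < \<alpha>" and [measurable]: "g \<in> borel_measurable borel"
  shows "wint \<alpha> (Qbox I) g \<le> ennreal (ilen I powr (\<alpha> + 2)) * box_operator \<alpha> g z"
proof -
  have "wint \<alpha> (Qbox I) g
      \<le> (\<integral>\<^sup>+w. ennreal (ilen I powr (\<alpha> + 2)) * (ennreal (box_kernel \<alpha> z w) * g w * ennreal (Im w powr \<alpha>) * indicator Hplane w) \<partial>lborel)"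
    unfolding wint_def
  proof (intro nn_integral_mono)
    fix w
    show "g w * ennreal (Im w powr \<alpha>) * indicator (Qbox I \<inter> Hplane) w
        \<le> ennreal (ilen I powr (\<alpha> + 2)) * (ennreal (box_kernel \<alpha> z w) * g w * ennreal (Im w powr \<alpha>) * indicator Hplane w)"
    proof (cases "w \<in> Qbox I")
      case True
      then have "1 \<le> ennreal (ilen I powr (\<alpha> + 2)) * ennreal (box_kernel \<alpha> z w)"
        using box_kernel_Qbox_ge[OF I True \<alpha>]
        by (simp add: ennreal_mult[symmetric] box_kernel_nonneg del: ennreal_mult')
      then have "g w * ennreal (Im w powr \<alpha>) * 1 \<le> g w * ennreal (Im w powr \<alpha>) * (ennreal (ilen I powr (\<alpha> + 2)) * ennreal (box_kernel \<alpha> z w))"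
        by (intro mult_left_mono) auto
      moreover have "w \<in> Hplane"
        using True Qbox_subset_Hplane by blast
      ultimately show ?thesis
        using True by (simp add: mult_ac)
    qed simp
  qed
  also have "\<dots> = ennreal (ilen I powr (\<alpha> + 2)) * box_operator \<alpha> g z"
    unfolding box_operator_def
    by (subst nn_integral_dV, measurable, subst nn_integral_cmult[symmetric])
      (auto intro!: nn_integral_cong simp: mult_ac)
  finally show ?thesis .
qed

section \<open>Jensen's inequality on boxes\<close>

lemma logpos_le_norm_powr:
  assumes "0 < s"
  shows "ennreal s * logpos w \<le> ennreal (norm w powr s)"
proof (cases "w = 0")
  case False
  have "s * ln (norm w) = ln (norm w powr s)"
    using False by (simp add: ln_powr)
  also have "\<dots> \<le> norm w powr s - 1"
    using False by (intro ln_le_minus_one) auto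
  finally have "s * max 0 (ln (norm w)) \<le> norm w powr s"
    using assms by (auto simp: max_def)
  then show ?thesis
    using assms False by (simp add: logpos_def ennreal_mult[symmetric] ennreal_leI del: ennreal_mult')
qed (simp add: logpos_def)

text \<open>The tangent line inequality \<open>exp d * (1 + (s * ln \<bar>w\<bar> - d)) \<le> \<bar>w\<bar> powr s\<close>, with all
  terms moved to the side where they are nonnegative so that it can be integrated in \<open>[0, \<infinity>]\<close>.\<close>

lemma exp_tangent_le_norm_powr:
  fixes d s :: real and w :: "'b :: real_normed_vector"
  assumes s: "0 < s"
  shows "ennreal (exp d) * (1 + ennreal s * logpos w + ennreal (max 0 (-d)))
    \<le> ennreal (norm w powr s) + ennreal (exp d) * (ennreal s * logneg w + ennreal (max 0 d))"
proof (cases "w = 0")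
  case True
  then show ?thesis
    using s by (simp add: logneg_def ennreal_mult_top)
next
  case False
  define l where "l = ln (norm w)"
  have "exp d * (1 + (s * l - d)) \<le> exp d * exp (s * l - d)"
    by (intro mult_left_mono exp_ge_add_one_self) auto
  also have "\<dots> = norm w powr s"
    using False by (simp add: l_def powr_def exp_add[symmetric])
  moreover have "exp d * (1 + s * max 0 l + max 0 (-d)) - exp d * (s * max 0 (-l) + max 0 d)
      = exp d * (1 + (s * l - d))"
    by (simp add: max_def algebra_simps)
  ultimately have "exp d * (1 + s * max 0 l + max 0 (-d)) \<le> norm w powr s + exp d * (s * max 0 (-l) + max 0 d)"
    by linarith
  have nonneg: "0 \<le> s * max 0 l" "0 \<le> s * max 0 (-l)"
    using s by auto
  have "ennreal (exp d) * (1 + ennreal s * logpos w + ennreal (max 0 (-d)))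
      = ennreal (exp d * (1 + s * max 0 l + max 0 (-d)))"
    using nonneg s False by (simp add: logpos_def l_def ennreal_mult ennreal_plus)
  also have "\<dots> \<le> ennreal (norm w powr s + exp d * (s * max 0 (-l) + max 0 d))"
    by (rule ennreal_leI) fact
  also have "\<dots> = ennreal (norm w powr s) + ennreal (exp d) * (ennreal s * logneg w + ennreal (max 0 d))"
    using nonneg s False by (simp add: logneg_def l_def ennreal_mult ennreal_plus)
  finally show ?thesis .
qed

lemma measurable_logpos [measurable (raw)]:
  fixes f :: "'a \<Rightarrow> 'b :: real_normed_vector"
  assumes [measurable]: "f \<in> borel_measurable M"
  shows "(\<lambda>x. logpos (f x)) \<in> borel_measurable M"
  unfolding logpos_def by measurable

lemma measurable_logneg [measurable (raw)]:
  fixes f :: "'a \<Rightarrow> 'b :: real_normed_vector"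
  assumes [measurable]: "f \<in> borel_measurable M"
  shows "(\<lambda>x. logneg (f x)) \<in> borel_measurable M"
  unfolding logneg_def by measurable

lemma wint_exp_tangent_le:
  fixes f :: "complex \<Rightarrow> complex"
  assumes [measurable]: "f \<in> borel_measurable borel" "Q \<in> sets borel"
    and Q: "wint \<alpha> Q (\<lambda>_. 1) = ennreal m" and s: "0 < s"
  shows "ennreal (exp d) * ennreal m
      + ennreal (exp d) * (ennreal s * wint \<alpha> Q (\<lambda>w. logpos (f w)) + ennreal (max 0 (-d)) * ennreal m)
    \<le> wint \<alpha> Q (\<lambda>w. ennreal (norm (f w) powr s))
      + ennreal (exp d) * (ennreal s * wint \<alpha> Q (\<lambda>w. logneg (f w)) + ennreal (max 0 d) * ennreal m)"
proof -
  have "wint \<alpha> Q (\<lambda>w. ennreal (exp d) * (1 + ennreal s * logpos (f w) + ennreal (max 0 (-d))))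
      \<le> wint \<alpha> Q (\<lambda>w. ennreal (norm (f w) powr s) + ennreal (exp d) * (ennreal s * logneg (f w) + ennreal (max 0 d)))"
    by (intro wint_mono exp_tangent_le_norm_powr s)
  then show ?thesis
    by (simp add: wint_cmult wint_add Q distrib_left add.assoc wint_cmult[where g="\<lambda>_. 1", simplified])
qed

lemma ennpow_expavg_le:
  fixes f :: "complex \<Rightarrow> complex" and s :: real
  assumes f [measurable]: "f \<in> borel_measurable borel" and s: "0 < s"
    and I: "is_interval I" "bounded I" "Qbox I \<noteq> {}" and \<alpha>: "-1 < \<alpha>"
  shows "ennpow (expavg \<alpha> f I) s * ennreal (Qmeas \<alpha> I) \<le> wint \<alpha> (Qbox I) (\<lambda>w. ennreal (norm (f w) powr s))"
proof -
  define m where "m = Qmeas \<alpha> I"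
  define A where "A = wint \<alpha> (Qbox I) (\<lambda>w. logpos (f w))"
  define B where "B = wint \<alpha> (Qbox I) (\<lambda>w. logneg (f w))"
  define E where "E = wint \<alpha> (Qbox I) (\<lambda>w. ennreal (norm (f w) powr s))"
  have [measurable]: "Qbox I \<in> sets borel"
    using I bounded_interval_sets Qbox_nonemptyD by auto
  have m: "0 < m" and Q: "wint \<alpha> (Qbox I) (\<lambda>_. 1) = ennreal m"
    using Qmeas_eq[OF I \<alpha>] wint_Qbox_one[OF I \<alpha>] Qbox_nonemptyD(2)[OF I(3)] \<alpha> by (auto simp: m_def)
  consider "B = \<infinity>" | "B \<noteq> \<infinity>" "A = \<infinity>" | P N where "A = ennreal P" "B = ennreal N" "0 \<le> P" "0 \<le> N"
    by (cases A rule: ennreal_cases; cases B rule: ennreal_cases) auto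
  then show ?thesis
  proof cases
    case 1
    then show ?thesis
      using s by (simp add: expavg_def A_def B_def ennpow_def)
  next
    case 2
    have "ennreal s * A \<le> E"
      unfolding A_def E_def using s by (subst wint_cmult[symmetric]) (auto intro: wint_mono logpos_le_norm_powr)
    then show ?thesis
      using 2 s by (simp add: expavg_def A_def[symmetric] B_def[symmetric] E_def[symmetric] ennpow_def
          ennreal_mult_top top_unique)
  next
    case (3 P N)
    define d where "d = s * ((P - N) / m)"
    have "ennpow (expavg \<alpha> f I) s = ennreal (exp d)"
      using 3 by (simp add: expavg_def A_def[symmetric] B_def[symmetric] m_def[symmetric] ennpow_def d_def powr_def)
    moreover have "ennreal s * A + ennreal (max 0 (-d)) * ennreal m = ennreal s * B + ennreal (max 0 d) * ennreal m"
    proof -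
      have "d * m = s * P - s * N"
        using m by (simp add: d_def field_simps)
      then have "s * P + max 0 (-d) * m = s * N + max 0 d * m"
        by (cases "0 \<le> d") (auto simp: max_def algebra_simps)
      then show ?thesis
        using 3 s m by (simp add: ennreal_mult[symmetric] ennreal_plus[symmetric] del: ennreal_plus ennreal_mult')
    qed
    ultimately show ?thesis
      using wint_exp_tangent_le[OF f \<open>Qbox I \<in> sets borel\<close> Q s, of d] 3
      by (simp add: A_def[symmetric] B_def[symmetric] E_def[symmetric] m_def[symmetric] mult.commute[of _ "ennreal m"]
          ennreal_mult_eq_top_iff add.commute[of _ E] ennreal_add_left_cancel_le
          ennreal_mult[symmetric] ennreal_plus[symmetric] del: ennreal_plus ennreal_mult')
  qed
qed

section \<open>The maximal inequality\<close>

lemma ennpow_mono: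
  assumes xy: "x \<le> y" and q: "0 < q"
  shows "ennpow x q \<le> ennpow y q"
proof (cases y rule: ennreal_cases)
  case (real r)
  with xy obtain t where t: "x = ennreal t" "0 \<le> t" "t \<le> r"
    by (cases x rule: ennreal_cases) (auto simp: top_unique)
  then have "t powr q \<le> r powr q"
    using q by (intro powr_mono2) auto
  then show ?thesis
    using t real by (simp add: ennpow_def)
qed (simp add: ennpow_def)

lemma ennpow_cmult: "0 < c \<Longrightarrow> ennpow (ennreal c * y) q = ennreal (c powr q) * ennpow y q"
  by (cases y rule: ennreal_cases) (auto simp: ennpow_def ennreal_mult_top ennreal_mult[symmetric] powr_mult simp del: ennreal_mult')

lemma ennpow_mult_2: "ennpow x (2 * s) = (ennpow x s)\<^sup>2"
proof (cases x rule: ennreal_cases)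
  case (real t)
  have "t powr (2 * s) = (t powr s)\<^sup>2"
    by (simp add: power2_eq_square powr_add[symmetric])
  then show ?thesis
    using real by (simp add: ennpow_def ennreal_power)
qed (simp add: ennpow_def)

lemma ennpow_Sup_le:
  assumes s: "0 < s" and le: "\<And>x. x \<in> X \<Longrightarrow> ennpow x s \<le> c"
  shows "ennpow (Sup X) s \<le> c"
proof (cases c rule: ennreal_cases)
  case (real r)
  note r = this
  have "x \<le> ennreal (r powr (1 / s))" if "x \<in> X" for x
  proof (cases x rule: ennreal_cases)
    case (real t)
    then have "(t powr s) powr (1 / s) \<le> r powr (1 / s)"
      using le[OF that] s r by (intro powr_mono2) (auto simp: ennpow_def)
    then show ?thesis
      using real s by (simp add: powr_powr)
  qed (use le[OF that] r in \<open>simp add: ennpow_def top_unique\<close>)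
  then have "ennpow (Sup X) s \<le> ennpow (ennreal (r powr (1 / s))) s"
    using s by (intro ennpow_mono Sup_least) auto
  then show ?thesis
    using r s by (simp add: ennpow_def powr_powr)
qed simp

lemma ennpow_Mexp_le:
  fixes f :: "complex \<Rightarrow> complex"
  assumes f [measurable]: "f \<in> borel_measurable borel" and s: "0 < s" and \<alpha>: "-1 < \<alpha>"
  shows "ennpow (Mexp \<alpha> f z) s \<le> ennreal (\<alpha> + 1) * box_operator \<alpha> (\<lambda>w. ennreal (norm (f w) powr s)) z"
  unfolding Mexp_def
proof (rule ennpow_Sup_le[OF s], clarify)
  fix I assume I: "is_interval I" "bounded I" "z \<in> Qbox I"
  define m where "m = ilen I powr (\<alpha> + 2) / (\<alpha> + 1)"
  have "Qbox I \<noteq> {}"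
    using I by auto
  moreover have "0 < ilen I"
    using Qbox_nonemptyD(2)[OF \<open>Qbox I \<noteq> {}\<close>] .
  ultimately have m: "0 < m" "Qmeas \<alpha> I = m"
    using Qmeas_eq I \<alpha> by (auto simp: m_def)
  have "ennreal m * ennpow (expavg \<alpha> f I) s \<le> wint \<alpha> (Qbox I) (\<lambda>w. ennreal (norm (f w) powr s))"
    using ennpow_expavg_le[OF f s I(1,2) \<open>Qbox I \<noteq> {}\<close> \<alpha>] m by (simp add: mult.commute)
  also have "\<dots> \<le> ennreal (ilen I powr (\<alpha> + 2)) * box_operator \<alpha> (\<lambda>w. ennreal (norm (f w) powr s)) z"
    using I \<alpha> by (intro wint_Qbox_le_box_operator) auto
  also have "ennreal (ilen I powr (\<alpha> + 2)) = ennreal m * ennreal (\<alpha> + 1)"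
    using \<alpha> m by (simp add: m_def ennreal_mult[symmetric] del: ennreal_mult')
  finally show "ennpow (expavg \<alpha> f I) s \<le> ennreal (\<alpha> + 1) * box_operator \<alpha> (\<lambda>w. ennreal (norm (f w) powr s)) z"
    using m by (simp add: mult.assoc ennreal_mult_le_mult_iff)
qed

lemma wint_ennpow_Mexp_le:
  fixes f :: "complex \<Rightarrow> complex"
  assumes f [measurable]: "f \<in> borel_measurable borel" and p: "0 < p" and \<alpha>: "-1 < \<alpha>"
  shows "wint \<alpha> UNIV (\<lambda>z. ennpow (Mexp \<alpha> f z) p)
    \<le> ennreal ((8 * (\<alpha> + 2) / (\<alpha> + 1))\<^sup>2) * wint \<alpha> UNIV (\<lambda>z. ennpow (ennreal (norm (f z))) p)"
proof -
  define h where "h w = ennreal (norm (f w) powr (p / 2))" for w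
  have [measurable]: "h \<in> borel_measurable borel"
    unfolding h_def by measurable
  have "wint \<alpha> UNIV (\<lambda>z. ennpow (Mexp \<alpha> f z) p) \<le> wint \<alpha> UNIV (\<lambda>z. ennreal ((\<alpha> + 1)\<^sup>2) * (box_operator \<alpha> h z)\<^sup>2)"
  proof (rule wint_mono)
    fix z
    have "ennpow (Mexp \<alpha> f z) p = (ennpow (Mexp \<alpha> f z) (p / 2))\<^sup>2"
      using ennpow_mult_2[of _ "p / 2"] by simp
    also have "\<dots> \<le> (ennreal (\<alpha> + 1) * box_operator \<alpha> h z)\<^sup>2"
      unfolding h_def using p \<alpha> by (intro power_mono ennpow_Mexp_le) auto
    finally show "ennpow (Mexp \<alpha> f z) p \<le> ennreal ((\<alpha> + 1)\<^sup>2) * (box_operator \<alpha> h z)\<^sup>2"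
      using \<alpha> by (simp add: power_mult_distrib ennreal_power)
  qed
  also have "\<dots> = ennreal ((\<alpha> + 1)\<^sup>2) * (\<integral>\<^sup>+z. (box_operator \<alpha> h z)\<^sup>2 \<partial>dV \<alpha>)"
    by (simp add: wint_UNIV_eq_nn_integral_dV nn_integral_cmult)
  also have "\<dots> \<le> ennreal ((\<alpha> + 1)\<^sup>2) * (ennreal ((8 * (\<alpha> + 2) / (\<alpha> + 1)\<^sup>2)\<^sup>2) * (\<integral>\<^sup>+w. (h w)\<^sup>2 \<partial>dV \<alpha>))"
    using \<alpha> by (intro mult_left_mono box_operator_L2_le) auto
  also have "ennreal ((\<alpha> + 1)\<^sup>2) * (ennreal ((8 * (\<alpha> + 2) / (\<alpha> + 1)\<^sup>2)\<^sup>2) * (\<integral>\<^sup>+w. (h w)\<^sup>2 \<partial>dV \<alpha>))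
      = ennreal ((8 * (\<alpha> + 2) / (\<alpha> + 1))\<^sup>2) * (\<integral>\<^sup>+w. (h w)\<^sup>2 \<partial>dV \<alpha>)"
    using \<alpha> by (simp add: ennreal_mult[symmetric] power2_eq_square mult.assoc[symmetric] del: ennreal_mult')
  also have "(\<integral>\<^sup>+w. (h w)\<^sup>2 \<partial>dV \<alpha>) = wint \<alpha> UNIV (\<lambda>z. ennpow (ennreal (norm (f z))) p)"
    by (simp add: wint_UNIV_eq_nn_integral_dV h_def ennpow_def power2_eq_square ennreal_mult[symmetric]
        powr_add[symmetric] del: ennreal_mult')
  finally show ?thesis .
qed

lemma wnorm_Mexp_le:
  fixes f :: "complex \<Rightarrow> complex"
  assumes f: "f \<in> borel_measurable borel" and p: "0 < p" and \<alpha>: "-1 < \<alpha>"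
  shows "wnorm p \<alpha> (Mexp \<alpha> f)
    \<le> ennreal ((8 * (\<alpha> + 2) / (\<alpha> + 1))\<^sup>2 powr (1 / p)) * wnorm p \<alpha> (\<lambda>z. ennreal (norm (f z)))"
proof -
  have "wnorm p \<alpha> (Mexp \<alpha> f)
      \<le> ennpow (ennreal ((8 * (\<alpha> + 2) / (\<alpha> + 1))\<^sup>2) * wint \<alpha> UNIV (\<lambda>z. ennpow (ennreal (norm (f z))) p)) (1 / p)"
    unfolding wnorm_def using wint_ennpow_Mexp_le[OF f p \<alpha>] p by (intro ennpow_mono) auto
  also have "\<dots> = ennreal ((8 * (\<alpha> + 2) / (\<alpha> + 1))\<^sup>2 powr (1 / p)) * wnorm p \<alpha> (\<lambda>z. ennreal (norm (f z)))"
    unfolding wnorm_def using \<alpha> by (intro ennpow_cmult) simp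
  finally show ?thesis .
qed

lemma Mexp_cong_Hplane:
  "(\<And>w. w \<in> Hplane \<Longrightarrow> f w = g w) \<Longrightarrow> Mexp \<alpha> f = Mexp \<alpha> g"
  unfolding Mexp_def expavg_def
  by (intro ext SUP_cong refl arg_cong2[where f=Let] ext) (simp_all cong: wint_cong_Hplane)

theorem lemma4p12:
  fixes p \<alpha> :: real
  assumes "0 < p" and "\<alpha> > -1"
  shows "\<exists>C::real. C > 0 \<and>
    (\<forall>f :: complex \<Rightarrow> complex. set_borel_measurable lborel Hplane f \<longrightarrow>
       wnorm p \<alpha> (Mexp \<alpha> f) \<le> ennreal (C powr (1 / p)) * wnorm p \<alpha> (\<lambda>z. ennreal (norm (f z))))"
proof (intro exI conjI allI impI)
  show "0 < (8 * (\<alpha> + 2) / (\<alpha> + 1))\<^sup>2"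
    using assms(2) by simp
  fix f :: "complex \<Rightarrow> complex"
  assume "set_borel_measurable lborel Hplane f"
  then have g: "(\<lambda>z. indicator Hplane z *\<^sub>R f z) \<in> borel_measurable borel"
    by (simp add: set_borel_measurable_def)
  have "Mexp \<alpha> f = Mexp \<alpha> (\<lambda>z. indicator Hplane z *\<^sub>R f z)"
    by (rule Mexp_cong_Hplane) simp
  moreover have "wnorm p \<alpha> (\<lambda>z. ennreal (norm (f z))) = wnorm p \<alpha> (\<lambda>z. ennreal (norm (indicator Hplane z *\<^sub>R f z)))"
    unfolding wnorm_def by (simp cong: wint_cong_Hplane)
  ultimately show "wnorm p \<alpha> (Mexp \<alpha> f)
      \<le> ennreal ((8 * (\<alpha> + 2) / (\<alpha> + 1))\<^sup>2 powr (1 / p)) * wnorm p \<alpha> (\<lambda>z. ennreal (norm (f z)))"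
    using wnorm_Mexp_le[OF g assms] by simp
qed

end
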